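(* Let $\beta>1$ and let $\mathcal{T}$ be a spanning tree of the ladder in the support of $\mathbb{P}$. Let $e=\{(i,h-1),(i,h)\}$ be a horizontal edge of the ray such that the other horizontal edge $\{(1-i,h-1),(1-i,h)\}$ is not in $\mathcal{T}$. Let $Y$ be the walk on the ray (the walk $X$ observed at its times on the ray) started at $(i,h)$. Then $$P^{\mathcal{T}}_{(i,h)}\big[Y_k\ne(i,h-1)\text{ for all }k\ge1\big]\ \ge\ \frac{\beta-1}{2\beta}.$$
   Context: Ladder graph: vertex set $\{0,1\}\times\mathbb{Z}$, vertical edges $z_k=\{(0,k),(1,k)\}$, horizontal edges joining $(i,k-1)$ and $(i,k)$. $\mathbb{P}$ is the law of the random spanning tree of the ladder obtained as the limit of weighted spanning tree measures on finite ladders (weight $c>0$ per vertical edge, $1$ per horizontal edge); a.s. it contains a unique bi-infinite self-avoiding path (the ray). Conductances: $z_k$ and the horizontal edges joining $(i,k-1),(i,k)$ have conductance $\beta^k$. $X$ is the random walk on $\mathcal{T}$ jumping to neighbors with probability proportional to conductances; the walk on the ray $Y$ jumps between ray neighbors with probabilities proportional to the conductances of the ray edges. *)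

theory Defs
  imports Complex_Main
begin

type_synonym vert = "nat \<times> int"

definition ladder_V :: "vert set" where
  "ladder_V = {v. fst v \<le> 1}"

definition ladder_E :: "vert set set" where
  "ladder_E = {{(0,k),(1,k)} | k. True} \<union> {{(i,k-1),(i,k)} | i k. i \<le> 1}"

definition vertical_edge :: "vert set \<Rightarrow> bool" where
  "vertical_edge e \<longleftrightarrow> (\<exists>k. e = {(0,k),(1,k)})"

definition adj_rel :: "vert set set \<Rightarrow> (vert \<times> vert) set" where
  "adj_rel t = {(x,y). {x,y} \<in> t}"

definition is_path :: "vert set set \<Rightarrow> vert list \<Rightarrow> bool" where
  "is_path t xs \<longleftrightarrow> (\<forall>j. Suc j < length xs \<longrightarrow> {xs!j, xs!Suc j} \<in> t)"

definition has_cycle :: "vert set set \<Rightarrow> bool" where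
  "has_cycle t \<longleftrightarrow> (\<exists>xs. length xs \<ge> 3 \<and> distinct xs \<and> is_path t xs \<and> {last xs, hd xs} \<in> t)"

definition spanning_tree :: "vert set \<Rightarrow> vert set set \<Rightarrow> vert set set \<Rightarrow> bool" where
  "spanning_tree V E t \<longleftrightarrow> t \<subseteq> E \<and> (\<forall>u\<in>V. \<forall>v\<in>V. (u,v) \<in> (adj_rel t)\<^sup>*) \<and> \<not> has_cycle t"

definition fin_V :: "nat \<Rightarrow> vert set" where
  "fin_V n = {v \<in> ladder_V. \<bar>snd v\<bar> \<le> int n}"

definition fin_E :: "nat \<Rightarrow> vert set set" where
  "fin_E n = {e \<in> ladder_E. e \<subseteq> fin_V n}"

definition fin_ST :: "nat \<Rightarrow> vert set set set" where
  "fin_ST n = {t. spanning_tree (fin_V n) (fin_E n) t}"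

definition tree_weight :: "real \<Rightarrow> vert set set \<Rightarrow> real" where
  "tree_weight c t = c ^ card {e \<in> t. vertical_edge e}"

text \<open>probability, under the weighted spanning tree measure of the finite ladder
  with levels -n..n, that the tree restricted to W equals S\<close>
definition cyl_prob :: "real \<Rightarrow> nat \<Rightarrow> vert set set \<Rightarrow> vert set set \<Rightarrow> real" where
  "cyl_prob c n W S =
     (\<Sum>t\<in>fin_ST n. if t \<inter> W = S then tree_weight c t else 0) / (\<Sum>t\<in>fin_ST n. tree_weight c t)"

text \<open>T lies in the (topological) support of the limit measure P: every cylinder
  set around T has positive limiting probability\<close>
definition in_support_P :: "real \<Rightarrow> vert set set \<Rightarrow> bool" where
  "in_support_P c T \<longleftrightarrow> T \<subseteq> ladder_E \<and>
     (\<forall>W. finite W \<and> W \<subseteq> ladder_E \<longrightarrow> (\<exists>p>0. (\<lambda>n. cyl_prob c n W (T \<inter> W)) \<longlonglongrightarrow> p))"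

definition biinf_path :: "vert set set \<Rightarrow> (int \<Rightarrow> vert) \<Rightarrow> bool" where
  "biinf_path T r \<longleftrightarrow> inj r \<and> (\<forall>n. {r n, r (n+1)} \<in> T)"

text \<open>R is the vertex set of the unique bi-infinite self-avoiding path of T\<close>
definition is_ray :: "vert set set \<Rightarrow> vert set \<Rightarrow> bool" where
  "is_ray T R \<longleftrightarrow> (\<exists>r. biinf_path T r \<and> range r = R) \<and> (\<forall>r. biinf_path T r \<longrightarrow> range r = R)"

definition ray_edge :: "vert set set \<Rightarrow> vert set \<Rightarrow> vert set \<Rightarrow> bool" where
  "ray_edge T R e \<longleftrightarrow> (\<exists>r n. biinf_path T r \<and> range r = R \<and> {r n, r (n+1)} = e)"

text \<open>z_k and the horizontal edges joining level k-1 and k have conductance beta^k\<close>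
definition cond :: "real \<Rightarrow> vert \<Rightarrow> vert \<Rightarrow> real" where
  "cond \<beta> u v = \<beta> powr real_of_int (max (snd u) (snd v))"

definition ray_nbrs :: "vert set set \<Rightarrow> vert set \<Rightarrow> vert \<Rightarrow> vert set" where
  "ray_nbrs T R x = {y \<in> R. {x,y} \<in> T}"

definition ray_step :: "real \<Rightarrow> vert set set \<Rightarrow> vert set \<Rightarrow> vert \<Rightarrow> vert \<Rightarrow> real" where
  "ray_step \<beta> T R x y = cond \<beta> x y / (\<Sum>y'\<in>ray_nbrs T R x. cond \<beta> x y')"

text \<open>avoid_prob beta T R a n x = P_x[Y_k \<noteq> a for k = 1..n]\<close>
primrec avoid_prob :: "real \<Rightarrow> vert set set \<Rightarrow> vert set \<Rightarrow> vert \<Rightarrow> nat \<Rightarrow> vert \<Rightarrow> real" where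
  "avoid_prob \<beta> T R a 0 x = 1"
| "avoid_prob \<beta> T R a (Suc n) x =
     (\<Sum>y\<in>ray_nbrs T R x. ray_step \<beta> T R x y * (if y = a then 0 else avoid_prob \<beta> T R a n y))"

text \<open>P_x[Y_k \<noteq> a for all k \<ge> 1] (limit of the decreasing sequence above)\<close>
definition escape_prob :: "real \<Rightarrow> vert set set \<Rightarrow> vert set \<Rightarrow> vert \<Rightarrow> vert \<Rightarrow> real" where
  "escape_prob \<beta> T R a x = (INF n. avoid_prob \<beta> T R a n x)"

end

theory Submission imports Defs begin

text \<open>Orient the ray so that it passes from \<open>(i,h-1)\<close> to \<open>(i,h)\<close>. Beyond \<open>(i,h)\<close> it never
  returns below level \<open>h\<close>: it would have to use the missing edge \<open>{(1-i,h-1),(1-i,h)}\<close> or revisit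
  \<open>(i,h-1)\<close>. The walk on the ray is a birth-death chain, so the resistance from \<open>(i,h-1)\<close> along the
  ray (the sum of inverse conductances) is harmonic off \<open>(i,h-1)\<close> and vanishes there; divided by a
  bound \<open>K\<close> on the total resistance it is a lower bound for the escape probability. The ray vertices
  beyond \<open>(i,h)\<close> are distinct and at levels \<open>\<ge> h\<close>, which gives \<open>K = 2 \<beta> powr (1-h) / (\<beta>-1)\<close>,
  while the resistance of the first edge is \<open>\<beta> powr (-h)\<close>.\<close>

lemma ladder_E_doubletonD:
  assumes "{x,y} \<in> ladder_E"
  shows "fst x \<le> 1 \<and> fst y \<le> 1 \<and> x \<noteq> y \<and>
    (snd x = snd y \<or> (fst x = fst y \<and> (snd y = snd x + 1 \<or> snd y = snd x - 1)))"
  using assms unfolding ladder_E_def by (auto simp: doubleton_eq_iff)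

lemma biinf_path_chord_has_cycle:
  assumes bp: "biinf_path T r" and ab: "a + 2 \<le> b" and chord: "{r a, r b} \<in> T"
  shows "has_cycle T"
proof -
  define xs where "xs = map (\<lambda>j. r (a + int j)) [0..<nat (b-a)+1]"
  have len: "length xs = nat (b-a) + 1" by (simp add: xs_def)
  have inj: "inj r" using bp by (simp add: biinf_path_def)
  have "distinct xs" unfolding xs_def
    by (auto simp: distinct_map inj_on_def inj_eq[OF inj] simp del: upt_Suc)
  moreover have "is_path T xs" unfolding is_path_def
  proof (intro allI impI)
    fix j assume "Suc j < length xs"
    hence "xs!j = r (a + int j)" "xs!Suc j = r (a + int j + 1)"
      by (simp_all add: xs_def len ac_simps del: upt_Suc)
    thus "{xs!j, xs!Suc j} \<in> T" using bp by (simp add: biinf_path_def)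
  qed
  moreover have "hd xs = r a" by (simp add: xs_def hd_map del: upt_Suc)
  moreover have "last xs = r b" using ab by (simp add: xs_def last_map del: upt_Suc)
  ultimately show ?thesis unfolding has_cycle_def using len ab chord
    by (intro exI[of _ xs]) (auto simp: insert_commute)
qed

lemma ray_nbrs_biinf_path:
  assumes bp: "biinf_path T r" and rng: "range r = R" and TE: "T \<subseteq> ladder_E"
    and nc: "\<not> has_cycle T"
  shows "ray_nbrs T R (r m) = {r (m-1), r (m+1)}"
proof
  show "{r (m-1), r (m+1)} \<subseteq> ray_nbrs T R (r m)"
    using bp rng unfolding ray_nbrs_def biinf_path_def
    by (auto simp: insert_commute) (metis diff_add_cancel insert_commute)
next
  show "ray_nbrs T R (r m) \<subseteq> {r (m-1), r (m+1)}"
  proof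
    fix y assume "y \<in> ray_nbrs T R (r m)"
    then obtain k where y: "y = r k" and ed: "{r m, r k} \<in> T"
      using rng unfolding ray_nbrs_def by auto
    have "r m \<noteq> r k" using ladder_E_doubletonD ed TE by blast
    hence "k \<noteq> m" by auto
    moreover have "\<not> m + 2 \<le> k" using biinf_path_chord_has_cycle[OF bp _ ed] nc by blast
    moreover have "\<not> k + 2 \<le> m"
      using biinf_path_chord_has_cycle[OF bp, of k m] ed nc by (auto simp: insert_commute)
    ultimately have "k = m - 1 \<or> k = m + 1" by linarith
    thus "y \<in> {r (m-1), r (m+1)}" using y by auto
  qed
qed

lemma biinf_path_reflect:
  assumes "biinf_path T r"
  shows "biinf_path T (\<lambda>k. r (- k))" and "range (\<lambda>k. r (- k)) = range r"
proof -
  show "biinf_path T (\<lambda>k. r (- k))" unfolding biinf_path_def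
  proof (intro conjI allI)
    show "inj (\<lambda>k. r (- k))" using assms unfolding biinf_path_def inj_def by (metis minus_minus)
    fix k :: int
    have "{r (-k-1), r (-k-1+1)} \<in> T" using assms unfolding biinf_path_def by blast
    thus "{r (- k), r (- (k + 1))} \<in> T" by (simp add: insert_commute)
  qed
  show "range (\<lambda>k. r (- k)) = range r" by (auto simp: image_iff) (metis minus_minus)
qed

lemma ray_edge_oriented:
  assumes "ray_edge T R {x,y}"
  obtains r n where "biinf_path T r" "range r = R" "r (n-1) = x" "r n = y"
proof -
  obtain r n where bp: "biinf_path T r" and rng: "range r = R" and e: "{r n, r (n+1)} = {x,y}"
    using assms unfolding ray_edge_def by blast
  from e consider "r n = x" "r (n+1) = y" | "r n = y" "r (n+1) = x"
    by (auto simp: doubleton_eq_iff)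
  thus thesis
  proof cases
    case 1
    with bp rng show thesis by (intro that[of r "n+1"]) simp_all
  next
    case 2
    with biinf_path_reflect[OF bp] rng show thesis by (intro that[of "\<lambda>k. r (- k)" "-n"]) (simp_all add: add.commute)
  qed
qed

lemma biinf_path_level_ge:
  assumes bp: "biinf_path T r" and TE: "T \<subseteq> ladder_E"
    and below: "r (n-1) = (i,h-1)" and at: "r n = (i,h)" and i: "i \<le> 1"
    and missing: "{(1-i,h-1),(1-i,h)} \<notin> T"
  shows "snd (r (n + int k)) \<ge> h"
proof (induction k)
  case 0 thus ?case using at by simp
next
  case (Suc k)
  show ?case
  proof (rule ccontr)
    let ?u = "r (n + int k)" and ?v = "r (n + int k + 1)"
    assume "\<not> ?thesis"
    hence lt: "snd ?v < h" by (simp add: ac_simps)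
    have ed: "{?u, ?v} \<in> T" using bp by (simp add: biinf_path_def)
    with TE have "{?u, ?v} \<in> ladder_E" by blast
    then have "fst ?u \<le> 1" "fst ?v = fst ?u" "snd ?u = h" "snd ?v = h - 1"
      using Suc.IH lt by (auto dest!: ladder_E_doubletonD)
    then obtain c where c: "c \<le> 1" "?u = (c,h)" "?v = (c,h-1)"
      by (metis prod.collapse)
    show False
    proof (cases "c = i")
      case True
      hence "?v = r (n - 1)" using c below by simp
      hence "n + int k + 1 = n - 1" using bp by (simp add: biinf_path_def inj_eq)
      thus False by simp
    next
      case False
      hence "c = 1 - i" using c i by linarith
      thus False using ed c missing by (simp add: insert_commute)
    qed
  qed
qed

lemma cond_commute: "cond \<beta> x y = cond \<beta> y x"
  by (simp add: cond_def max.commute)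

definition ray_resistance :: "real \<Rightarrow> (int \<Rightarrow> vert) \<Rightarrow> int \<Rightarrow> int \<Rightarrow> real" where
  "ray_resistance \<beta> r a m = (\<Sum>j\<in>{a..<m}. 1 / cond \<beta> (r j) (r (j+1)))"

lemma ray_resistance_eq_0: "m \<le> a \<Longrightarrow> ray_resistance \<beta> r a m = 0"
  by (simp add: ray_resistance_def)

lemma ray_resistance_step:
  assumes "a \<le> m"
  shows "ray_resistance \<beta> r a (m+1) = ray_resistance \<beta> r a m + 1 / cond \<beta> (r m) (r (m+1))"
proof -
  have "{a..<m+1} = insert m {a..<m}" using assms by auto
  thus ?thesis unfolding ray_resistance_def by simp
qed

lemma sum_powr_neg_atLeastAtMost:
  fixes \<beta> :: real
  assumes "\<beta> > 1" and "M \<ge> h - 1"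
  shows "(\<Sum>l\<in>{h..M}. \<beta> powr (- real_of_int l))
    = (\<beta> powr (1 - real_of_int h) - \<beta> powr (- real_of_int M)) / (\<beta> - 1)"
  using assms(2)
proof (induction M rule: int_ge_induct)
  case base thus ?case by simp
next
  case (step M)
  have "{h..M+1} = insert (M+1) {h..M}" using step.hyps by auto
  moreover have "\<beta> powr (- real_of_int (M+1)) = \<beta> powr (- real_of_int M) / \<beta>"
    using assms(1) by (simp add: powr_diff powr_minus divide_simps powr_add)
  ultimately show ?case using step.IH assms(1)
    by (simp add: divide_simps) (simp add: algebra_simps)
qed

lemma sum_powr_neg_levels_le:
  fixes \<beta> :: real and V :: "vert set"
  assumes "\<beta> > 1" and V: "V \<subseteq> {0,1} \<times> {h..M}"
  shows "(\<Sum>v\<in>V. \<beta> powr (- real_of_int (snd v))) \<le> 2 * \<beta> powr (1 - real_of_int h) / (\<beta> - 1)"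
proof -
  have "(\<Sum>v\<in>V. \<beta> powr (- real_of_int (snd v)))
      \<le> (\<Sum>v\<in>{0,1::nat} \<times> {h..M}. \<beta> powr (- real_of_int (snd v)))"
    by (rule sum_mono2[OF _ V]) simp_all
  also have "\<dots> = (\<Sum>(c,l)\<in>{0,1::nat} \<times> {h..M}. \<beta> powr (- real_of_int l))"
    by (simp add: split_def)
  also have "\<dots> = 2 * (\<Sum>l\<in>{h..M}. \<beta> powr (- real_of_int l))"
    by (simp flip: sum.cartesian_product)
  also have "\<dots> \<le> 2 * \<beta> powr (1 - real_of_int h) / (\<beta> - 1)"
  proof (cases "M \<ge> h - 1")
    case True
    thus ?thesis using assms(1) by (simp add: sum_powr_neg_atLeastAtMost divide_right_mono)
  next
    case False
    hence "{h..M} = {}" by auto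
    thus ?thesis using assms(1) by simp
  qed
  finally show ?thesis .
qed

lemma ray_resistance_le:
  assumes beta: "\<beta> > 1" and bp: "biinf_path T r" and TE: "T \<subseteq> ladder_E"
    and level: "\<And>j. n \<le> j \<Longrightarrow> h \<le> snd (r j)"
  shows "ray_resistance \<beta> r (n-1) m \<le> 2 * \<beta> powr (1 - real_of_int h) / (\<beta> - 1)"
proof (cases "n \<le> m")
  case False
  thus ?thesis using beta by (simp add: ray_resistance_eq_0)
next
  case True
  have inj: "inj r" using bp by (simp add: biinf_path_def)
  have "ray_resistance \<beta> r (n-1) m \<le> (\<Sum>j\<in>{n-1..<m}. \<beta> powr (- real_of_int (snd (r (j+1)))))"
    unfolding ray_resistance_def
  proof (rule sum_mono)
    fix j
    have "\<beta> powr real_of_int (snd (r (j+1))) \<le> cond \<beta> (r j) (r (j+1))"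
      unfolding cond_def using beta by simp
    hence "1 / cond \<beta> (r j) (r (j+1)) \<le> 1 / \<beta> powr real_of_int (snd (r (j+1)))"
      using beta by (intro divide_left_mono) (auto simp: cond_def)
    thus "1 / cond \<beta> (r j) (r (j+1)) \<le> \<beta> powr (- real_of_int (snd (r (j+1))))"
      by (simp add: powr_minus_divide)
  qed
  also have "\<dots> = (\<Sum>j\<in>{n..m}. \<beta> powr (- real_of_int (snd (r j))))"
  proof -
    have shift: "{n..m} = (\<lambda>j. j+1) ` {n-1..<m}"
      by (auto simp: image_iff intro!: bexI[of _ "_ - 1"])
    show ?thesis unfolding shift by (subst sum.reindex) (auto simp: inj_on_def)
  qed
  also have "\<dots> = (\<Sum>v\<in>r ` {n..m}. \<beta> powr (- real_of_int (snd v)))"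
    by (simp add: sum.reindex inj_on_subset[OF inj])
  also have "\<dots> \<le> 2 * \<beta> powr (1 - real_of_int h) / (\<beta> - 1)"
  proof (rule sum_powr_neg_levels_le[OF beta])
    show "r ` {n..m} \<subseteq> {0,1} \<times> {h..Max (snd ` r ` {n..m})}"
    proof
      fix v assume v: "v \<in> r ` {n..m}"
      then obtain j where "j \<in> {n..m}" "v = r j" by auto
      moreover have "{r j, r (j+1)} \<in> ladder_E" using bp TE by (auto simp: biinf_path_def)
      ultimately have "fst v \<le> 1" "h \<le> snd v" using ladder_E_doubletonD level by auto
      moreover have "snd v \<le> Max (snd ` r ` {n..m})" using v by (intro Max_ge) auto
      ultimately show "v \<in> {0,1} \<times> {h..Max (snd ` r ` {n..m})}" by (cases v) auto
    qed
  qed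
  finally show ?thesis .
qed

lemma avoid_prob_nonneg:
  assumes "\<beta> > 0"
  shows "avoid_prob \<beta> T R a n x \<ge> 0"
proof (induction n arbitrary: x)
  case (Suc n)
  have "ray_step \<beta> T R x y \<ge> 0" for y
    unfolding ray_step_def cond_def using assms by (intro divide_nonneg_nonneg sum_nonneg) auto
  thus ?case using Suc by (auto intro!: sum_nonneg mult_nonneg_nonneg)
qed simp

lemma conductance_weighted_mean:
  fixes x y s :: real
  assumes "x > 0" "y > 0"
  shows "s = x / (x + y) * (s - 1 / x) + y / (x + y) * (s + 1 / y)"
proof -
  have "x / (x + y) * (s - 1 / x) + y / (x + y) * (s + 1 / y) = ((x + y) * s) / (x + y)"
    using assms by (simp add: divide_simps) (simp add: algebra_simps)
  thus ?thesis using assms by simp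
qed

lemma resistance_ratio_le_avoid_prob:
  assumes beta: "\<beta> > 0" and TE: "T \<subseteq> ladder_E" and nc: "\<not> has_cycle T"
    and bp: "biinf_path T r" and rng: "range r = R"
    and K: "K > 0" "\<And>m. ray_resistance \<beta> r a m \<le> K"
  shows "ray_resistance \<beta> r a m / K \<le> avoid_prob \<beta> T R (r a) n (r m)"
proof (induction n arbitrary: m)
  case 0
  show ?case using K by simp
next
  case (Suc n)
  let ?\<rho> = "\<lambda>m. ray_resistance \<beta> r a m / K" and ?A = "avoid_prob \<beta> T R (r a) n"
  show ?case
  proof (cases "m \<le> a")
    case True
    thus ?thesis using avoid_prob_nonneg[OF beta, of T R "r a" "Suc n" "r m"]
      by (simp add: ray_resistance_eq_0 del: avoid_prob.simps)
  next
    case False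
    have inj: "inj r" using bp by (simp add: biinf_path_def)
    define c\<^sub>1 where "c\<^sub>1 = cond \<beta> (r (m-1)) (r m)"
    define c\<^sub>2 where "c\<^sub>2 = cond \<beta> (r m) (r (m+1))"
    have c: "c\<^sub>1 > 0" "c\<^sub>2 > 0" using beta by (simp_all add: c\<^sub>1_def c\<^sub>2_def cond_def)
    have "r (m-1) \<noteq> r (m+1)" "r (m+1) \<noteq> r a" using False by (simp_all add: inj_eq[OF inj])
    hence step: "avoid_prob \<beta> T R (r a) (Suc n) (r m)
      = c\<^sub>1 / (c\<^sub>1 + c\<^sub>2) * (if r (m-1) = r a then 0 else ?A (r (m-1))) + c\<^sub>2 / (c\<^sub>1 + c\<^sub>2) * ?A (r (m+1))"
      by (simp add: ray_nbrs_biinf_path[OF bp rng TE nc] ray_step_def c\<^sub>1_def c\<^sub>2_def cond_commute)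
    have "?\<rho> (m-1) \<le> (if r (m-1) = r a then 0 else ?A (r (m-1)))"
    proof (cases "r (m-1) = r a")
      case True
      hence "m - 1 = a" by (simp add: inj_eq[OF inj])
      thus ?thesis by (simp add: ray_resistance_eq_0)
    qed (use Suc.IH in simp)
    moreover have "?\<rho> m = c\<^sub>1 / (c\<^sub>1 + c\<^sub>2) * ?\<rho> (m-1) + c\<^sub>2 / (c\<^sub>1 + c\<^sub>2) * ?\<rho> (m+1)"
    proof -
      have "ray_resistance \<beta> r a (m-1) = ray_resistance \<beta> r a m - 1 / c\<^sub>1"
        using ray_resistance_step[of a "m-1" \<beta> r] False by (simp add: c\<^sub>1_def)
      moreover have "ray_resistance \<beta> r a (m+1) = ray_resistance \<beta> r a m + 1 / c\<^sub>2"
        using ray_resistance_step[of a m \<beta> r] False by (simp add: c\<^sub>2_def)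
      ultimately have harmonic: "ray_resistance \<beta> r a m
          = c\<^sub>1 / (c\<^sub>1 + c\<^sub>2) * ray_resistance \<beta> r a (m-1) + c\<^sub>2 / (c\<^sub>1 + c\<^sub>2) * ray_resistance \<beta> r a (m+1)"
        using conductance_weighted_mean[OF c] by simp
      show ?thesis by (subst harmonic) (simp add: add_divide_distrib)
    qed
    ultimately have "?\<rho> m \<le> c\<^sub>1 / (c\<^sub>1 + c\<^sub>2) * (if r (m-1) = r a then 0 else ?A (r (m-1)))
        + c\<^sub>2 / (c\<^sub>1 + c\<^sub>2) * ?A (r (m+1))"
      using c Suc.IH[of "m+1"] by (smt (verit) add_pos_pos divide_pos_pos mult_left_mono)
    thus ?thesis by (simp only: step)
  qed
qed

lemma resistance_ratio_le_escape_prob: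
  assumes "\<beta> > 0" "T \<subseteq> ladder_E" "\<not> has_cycle T" "biinf_path T r" "range r = R"
    and "K > 0" "\<And>m. ray_resistance \<beta> r a m \<le> K"
  shows "ray_resistance \<beta> r a m / K \<le> escape_prob \<beta> T R (r a) (r m)"
  unfolding escape_prob_def
  by (rule cINF_greatest) (simp_all add: resistance_ratio_le_avoid_prob[OF assms])

theorem mainTheorem10:
  fixes \<beta> c :: real and T :: "vert set set" and R :: "vert set" and i :: nat and h :: int
  assumes "\<beta> > 1" and "c > 0"
    and "spanning_tree ladder_V ladder_E T"
    and "in_support_P c T"
    and "is_ray T R"
    and "i \<le> 1"
    and "ray_edge T R {(i,h-1),(i,h)}"
    and "{(1-i,h-1),(1-i,h)} \<notin> T"
  shows "escape_prob \<beta> T R (i,h-1) (i,h) \<ge> (\<beta> - 1) / (2 * \<beta>)"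
proof -
  have TE: "T \<subseteq> ladder_E" and nc: "\<not> has_cycle T"
    using assms(3) by (auto simp: spanning_tree_def)
  obtain r n where bp: "biinf_path T r" and rng: "range r = R"
    and below: "r (n-1) = (i,h-1)" and at: "r n = (i,h)"
    using ray_edge_oriented[OF assms(7)] .
  define K where "K = 2 * \<beta> powr (1 - real_of_int h) / (\<beta> - 1)"
  have "h \<le> snd (r j)" if "n \<le> j" for j
    using biinf_path_level_ge[OF bp TE below at assms(6,8), of "nat (j - n)"] that by simp
  hence "ray_resistance \<beta> r (n-1) m \<le> K" for m
    unfolding K_def by (rule ray_resistance_le[OF assms(1) bp TE])
  moreover have "K > 0" using assms(1) by (simp add: K_def)
  ultimately have "ray_resistance \<beta> r (n-1) n / K \<le> escape_prob \<beta> T R (i,h-1) (i,h)"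
    using resistance_ratio_le_escape_prob[OF _ TE nc bp rng, of \<beta> K "n-1" n] assms(1) below at
    by simp
  moreover have "ray_resistance \<beta> r (n-1) n / K = (\<beta> - 1) / (2 * \<beta>)"
    using ray_resistance_step[of "n-1" "n-1" \<beta> r] below at assms(1)
    by (simp add: ray_resistance_eq_0 cond_def K_def powr_diff powr_minus divide_simps)
  ultimately show ?thesis by simp
qed

end
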